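(* Let $k\geq 1$ be a fixed integer, $p=\frac{\log n+(k+1)\log\log n-\log\log\log n}{n}$, $G=G(n,p)$ and $D=\frac{\log n}{\log\log n}$. Call a vertex $v$ small if $d_G(v)<\frac{\log n}{100}$. Then almost surely there do not exist two distinct small vertices of $G$ at distance at most $\frac{3}{4}D$ in $G$.
   Context: $\log$ is the natural logarithm; $G(n,p)$ is the binomial random graph on $n$ vertices, $n\to\infty$; "almost surely" means with probability tending to $1$; $d_G(v)$ is the degree of $v$ in $G$. *)

theory Defs
  imports Complex_Main
begin

text \<open>Simple graphs on the vertex set {0..<n}: an edge set is a set of 2-element subsets.\<close>

definition all_edges :: "nat \<Rightarrow> nat set set" where
  "all_edges n = {{i, j} | i j. i < n \<and> j < n \<and> i \<noteq> j}"

text \<open>Probability that the binomial random graph G(n,p) has property P: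
  each of the n choose 2 possible edges is present independently with probability p.\<close>

definition gnp_prob :: "nat \<Rightarrow> real \<Rightarrow> (nat set set \<Rightarrow> bool) \<Rightarrow> real" where
  "gnp_prob n p P =
     (\<Sum>E \<in> {E. E \<subseteq> all_edges n \<and> P E}.
        p ^ card E * (1 - p) ^ (card (all_edges n) - card E))"

definition degree :: "nat set set \<Rightarrow> nat \<Rightarrow> nat" where
  "degree E v = card {u. {u, v} \<in> E}"

definition is_walk :: "nat set set \<Rightarrow> nat list \<Rightarrow> bool" where
  "is_walk E xs \<longleftrightarrow> xs \<noteq> [] \<and> (\<forall>i. Suc i < length xs \<longrightarrow> {xs ! i, xs ! Suc i} \<in> E)"

definition dist_at_most :: "nat set set \<Rightarrow> nat \<Rightarrow> nat \<Rightarrow> real \<Rightarrow> bool" where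
  "dist_at_most E u v L \<longleftrightarrow>
     (\<exists>xs. is_walk E xs \<and> hd xs = u \<and> last xs = v \<and> real (length xs - 1) \<le> L)"

end

theory Submission
  imports Defs "HOL-Real_Asymp.Real_Asymp"
begin

text \<open>Two small vertices at distance at most \<open>X\<close> are the ends of a path with \<open>l \<le> X\<close> edges
  whose ends each have fewer than \<open>T = log n / 100\<close> neighbours off the path. For a fixed path,
  the \<open>l\<close> path edges and the \<open>2(n - l - 1)\<close> off-path edges at its ends are distinct, so an
  exponential moment bound with base \<open>c = 1/64\<close> bounds its probability by
  \<open>c^(-2T) p^l (1 - (1 - c) p)^(2(n - l - 1))\<close>. There are at most \<open>n^(l+1)\<close> such paths, and
  since \<open>log n \<le> np \<le> 2 log n\<close> and \<open>X = (3/4) log n / log log n\<close>, the union bound is at most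
  \<open>n \<cdot> n^(3/4 + o(1)) \<cdot> n^0.12 \<cdot> n^(-63/32 + o(1))\<close>, a negative power of \<open>n\<close>.\<close>

lemma is_walk_iff_successively:
  "is_walk E xs \<longleftrightarrow> xs \<noteq> [] \<and> successively (\<lambda>a b. {a, b} \<in> E) xs"
  unfolding is_walk_def successively_conv_nth ..

lemma is_walk_imp_distinct_walk:
  assumes "is_walk E xs"
  obtains ys where "is_walk E ys" "distinct ys" "hd ys = hd xs" "last ys = last xs"
    "length ys \<le> length xs"
  using assms
proof (induction "length xs" arbitrary: xs rule: less_induct)
  case less
  show ?case
  proof (cases "distinct xs")
    case True
    with less.prems show ?thesis by blast
  next
    case False
    then obtain as y bs cs where xs: "xs = as @ [y] @ bs @ [y] @ cs"
      using not_distinct_decomp by blast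
    let ?ys = "as @ [y] @ cs"
    let ?P = "\<lambda>a b. {a, b} \<in> E"
    have "successively ?P ((as @ [y] @ bs) @ (y # cs))"
      using less.prems(2) unfolding xs is_walk_iff_successively by simp
    then have "successively ?P (y # cs)"
      unfolding successively_append_iff by blast
    then have walk: "is_walk E ?ys"
      using less.prems(2) unfolding xs is_walk_iff_successively
      by (auto simp: successively_append_iff)
    have ends: "hd ?ys = hd xs" "last ?ys = last xs" and shorter: "length ?ys < length xs"
      by (simp_all add: xs hd_append)
    show ?thesis
      by (rule less.hyps[OF shorter _ walk]) (use less.prems(1) ends shorter in auto)
  qed
qed

lemma is_walk_set_subset:
  assumes "is_walk E xs" "E \<subseteq> all_edges n" "2 \<le> length xs"
  shows "set xs \<subseteq> {..<n}"
proof
  fix x assume "x \<in> set xs"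
  then obtain i where i: "i < length xs" "x = xs ! i" by (auto simp: in_set_conv_nth)
  define j where "j = (if Suc i < length xs then i else i - 1)"
  have "Suc j < length xs" "x \<in> {xs ! j, xs ! Suc j}"
    using i assms(3) by (auto simp: j_def Suc_diff_1)
  moreover have "{xs ! j, xs ! Suc j} \<in> all_edges n"
    using assms(1,2) \<open>Suc j < length xs\<close> unfolding is_walk_def by blast
  ultimately show "x \<in> {..<n}" unfolding all_edges_def by (auto simp: doubleton_eq_iff)
qed

lemma finite_all_edges: "finite (all_edges n)"
proof -
  have "all_edges n \<subseteq> Pow {..<n}" unfolding all_edges_def by auto
  then show ?thesis by (rule finite_subset) simp
qed

definition gnp_weight :: "nat \<Rightarrow> real \<Rightarrow> nat set set \<Rightarrow> real" where
  "gnp_weight n q E = q ^ card E * (1 - q) ^ (card (all_edges n) - card E)"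

lemma gnp_weight_nonneg: "0 \<le> q \<Longrightarrow> q \<le> 1 \<Longrightarrow> 0 \<le> gnp_weight n q E"
  unfolding gnp_weight_def by simp

lemma gnp_prob_eq_sum_Pow:
  "gnp_prob n q P = (\<Sum>E\<in>Pow (all_edges n). if P E then gnp_weight n q E else 0)"
proof -
  have "{E. E \<subseteq> all_edges n \<and> P E} = {E \<in> Pow (all_edges n). P E}" by auto
  then show ?thesis
    unfolding gnp_prob_def gnp_weight_def
    by (simp only: sum.inter_filter[OF finite_Pow_iff[THEN iffD2, OF finite_all_edges]])
qed

lemma gnp_prob_nonneg: "0 \<le> q \<Longrightarrow> q \<le> 1 \<Longrightarrow> 0 \<le> gnp_prob n q P"
  unfolding gnp_prob_eq_sum_Pow by (intro sum_nonneg) (simp add: gnp_weight_nonneg)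

lemma sum_Pow_bernoulli_weights:
  fixes p :: real
  assumes "finite A"
  shows "(\<Sum>E\<in>Pow A. p ^ card E * (1 - p) ^ (card A - card E)) = 1"
proof -
  have "(\<Sum>E\<in>Pow A. p ^ card E * (1 - p) ^ (card A - card E))
      = (\<Sum>E\<in>Pow A. (\<Prod>x\<in>E. p) * (\<Prod>x\<in>A - E. 1 - p))"
    using assms by (intro sum.cong refl) (simp add: card_Diff_subset finite_subset)
  also have "\<dots> = (\<Prod>x\<in>A. p + (1 - p))"
    by (rule prod_add[OF assms, symmetric])
  finally show ?thesis by simp
qed

lemma gnp_prob_Not: "gnp_prob n q (\<lambda>E. \<not> P E) = 1 - gnp_prob n q P"
proof -
  have "gnp_prob n q P + gnp_prob n q (\<lambda>E. \<not> P E) = (\<Sum>E\<in>Pow (all_edges n). gnp_weight n q E)"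
    unfolding gnp_prob_eq_sum_Pow sum.distrib[symmetric] by (rule sum.cong) auto
  also have "\<dots> = 1"
    unfolding gnp_weight_def by (rule sum_Pow_bernoulli_weights[OF finite_all_edges])
  finally show ?thesis by simp
qed

lemma gnp_prob_union_bound:
  assumes "0 \<le> q" "q \<le> 1" "finite I"
    and cover: "\<And>E. E \<subseteq> all_edges n \<Longrightarrow> P E \<Longrightarrow> \<exists>i\<in>I. Q i E"
  shows "gnp_prob n q P \<le> (\<Sum>i\<in>I. gnp_prob n q (Q i))"
proof -
  have "gnp_prob n q P
      \<le> (\<Sum>E\<in>Pow (all_edges n). \<Sum>i\<in>I. if Q i E then gnp_weight n q E else 0)"
    unfolding gnp_prob_eq_sum_Pow
  proof (rule sum_mono)
    fix E assume "E \<in> Pow (all_edges n)"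
    then show "(if P E then gnp_weight n q E else 0) \<le> (\<Sum>i\<in>I. if Q i E then gnp_weight n q E else 0)"
      using cover[of E] assms(1-3) gnp_weight_nonneg[of q n E]
        member_le_sum[of _ I "\<lambda>i. if Q i E then gnp_weight n q E else 0"]
      by (force intro: sum_nonneg)
  qed
  also have "\<dots> = (\<Sum>i\<in>I. gnp_prob n q (Q i))"
    unfolding gnp_prob_eq_sum_Pow by (rule sum.swap)
  finally show ?thesis .
qed

lemma sum_Pow_tilted_weights:
  fixes p c :: real
  assumes A: "finite A" and "F \<subseteq> A" "B \<subseteq> A" "F \<inter> B = {}"
  shows "(\<Sum>E\<in>Pow A. if F \<subseteq> E then c ^ card (E \<inter> B) * (p ^ card E * (1 - p) ^ (card A - card E)) else 0)
         = p ^ card F * (c * p + 1 - p) ^ card B"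
proof -
  define f where "f e = p * (if e \<in> B then c else 1)" for e
  define g where "g e = (if e \<in> F then 0 else 1 - p)" for e
  have "(\<Sum>E\<in>Pow A. if F \<subseteq> E then c ^ card (E \<inter> B) * (p ^ card E * (1 - p) ^ (card A - card E)) else 0)
      = (\<Sum>E\<in>Pow A. (\<Prod>e\<in>E. f e) * (\<Prod>e\<in>A - E. g e))"
  proof (rule sum.cong[OF refl])
    fix E assume "E \<in> Pow A"
    then have E: "E \<subseteq> A" "finite E" using A finite_subset by auto
    have f_prod: "(\<Prod>e\<in>E. f e) = p ^ card E * c ^ card (E \<inter> B)"
      unfolding f_def prod.distrib using prod.inter_restrict[OF E(2), of "\<lambda>_. c" B] by simp
    show "(if F \<subseteq> E then c ^ card (E \<inter> B) * (p ^ card E * (1 - p) ^ (card A - card E)) else 0)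
        = (\<Prod>e\<in>E. f e) * (\<Prod>e\<in>A - E. g e)"
    proof (cases "F \<subseteq> E")
      case True
      then have "(\<Prod>e\<in>A - E. g e) = (\<Prod>e\<in>A - E. 1 - p)"
        unfolding g_def by (intro prod.cong) auto
      also have "\<dots> = (1 - p) ^ (card A - card E)"
        using E by (simp add: card_Diff_subset)
      finally have "(\<Prod>e\<in>A - E. g e) = (1 - p) ^ (card A - card E)" .
      with True f_prod show ?thesis by simp
    next
      case False
      then have "(\<Prod>e\<in>A - E. g e) = 0"
        using A \<open>F \<subseteq> A\<close> unfolding g_def by (intro prod_zero) auto
      with False show ?thesis by simp
    qed
  qed
  also have "\<dots> = (\<Prod>e\<in>A. f e + g e)"
    by (rule prod_add[OF A, symmetric])
  also have "\<dots> = (\<Prod>e\<in>A. (if e \<in> F then p else 1) * (if e \<in> B then c * p + 1 - p else 1))"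
    using \<open>F \<inter> B = {}\<close> unfolding f_def g_def by (intro prod.cong) auto
  also have "\<dots> = p ^ card F * (c * p + 1 - p) ^ card B"
    unfolding prod.distrib prod.inter_restrict[OF A, symmetric]
    using \<open>F \<subseteq> A\<close> \<open>B \<subseteq> A\<close> by (simp add: Int_absorb1)
  finally show ?thesis .
qed

lemma gnp_prob_le_exponential_moment:
  fixes p c t :: real
  assumes "F \<subseteq> all_edges n" "B \<subseteq> all_edges n" "F \<inter> B = {}"
    and p: "0 \<le> p" "p \<le> 1" and c: "0 < c" "c \<le> 1"
    and event: "\<And>E. E \<subseteq> all_edges n \<Longrightarrow> Q E \<Longrightarrow> F \<subseteq> E \<and> real (card (E \<inter> B)) < t"
  shows "gnp_prob n p Q \<le> c powr (-t) * (p ^ card F * (c * p + 1 - p) ^ card B)"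
proof -
  have "gnp_prob n p Q
      \<le> (\<Sum>E\<in>Pow (all_edges n). c powr (-t) * (if F \<subseteq> E then c ^ card (E \<inter> B) * gnp_weight n p E else 0))"
    unfolding gnp_prob_eq_sum_Pow
  proof (rule sum_mono)
    fix E assume E: "E \<in> Pow (all_edges n)"
    have w: "0 \<le> gnp_weight n p E" using p by (rule gnp_weight_nonneg)
    show "(if Q E then gnp_weight n p E else 0)
        \<le> c powr (-t) * (if F \<subseteq> E then c ^ card (E \<inter> B) * gnp_weight n p E else 0)"
    proof (cases "Q E")
      case True
      \<comment> \<open>Markov's inequality for \<open>c ^ card (E \<inter> B)\<close>: since \<open>c \<le> 1\<close>, it is at least \<open>c powr t\<close> on the event.\<close>
      with event E have "F \<subseteq> E" "real (card (E \<inter> B)) - t \<le> 0" by force+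
      then have "1 \<le> c powr (real (card (E \<inter> B)) - t)"
        using c by (simp add: powr_def mult_nonpos_nonpos)
      also have "\<dots> = c powr (-t) * c ^ card (E \<inter> B)"
        using c by (simp add: powr_diff powr_realpow powr_minus divide_inverse)
      finally have "1 * gnp_weight n p E \<le> (c powr (-t) * c ^ card (E \<inter> B)) * gnp_weight n p E"
        using w by (rule mult_right_mono)
      then show ?thesis
        using True \<open>F \<subseteq> E\<close> by (simp add: mult.assoc)
    qed (use w c in simp)
  qed
  also have "\<dots> = c powr (-t) * (p ^ card F * (c * p + 1 - p) ^ card B)"
    unfolding sum_distrib_left[symmetric] gnp_weight_def
    by (subst sum_Pow_tilted_weights[OF finite_all_edges assms(1-3)]) simp
  finally show ?thesis .
qed

definition path_edges :: "nat list \<Rightarrow> nat set set" where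
  "path_edges xs = (\<lambda>i. {xs ! i, xs ! Suc i}) ` {i. Suc i < length xs}"

definition edges_off_path :: "nat \<Rightarrow> nat list \<Rightarrow> nat \<Rightarrow> nat set set" where
  "edges_off_path n xs u = (\<lambda>w. {u, w}) ` ({..<n} - set xs)"

text \<open>Counting only neighbours off the path makes the three requirements depend on pairwise
  disjoint sets of edges, hence independent.\<close>

definition sparse_ended_path :: "nat \<Rightarrow> real \<Rightarrow> nat list \<Rightarrow> nat set set \<Rightarrow> bool" where
  "sparse_ended_path n t xs E \<longleftrightarrow> distinct xs \<and> path_edges xs \<subseteq> E
     \<and> real (card (E \<inter> edges_off_path n xs (hd xs))) < t
     \<and> real (card (E \<inter> edges_off_path n xs (last xs))) < t"

lemma path_edges_subset_all_edges:
  assumes "distinct xs" "set xs \<subseteq> {..<n}"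
  shows "path_edges xs \<subseteq> all_edges n"
proof
  fix e assume "e \<in> path_edges xs"
  then obtain i where i: "Suc i < length xs" "e = {xs ! i, xs ! Suc i}"
    unfolding path_edges_def by auto
  have "xs ! i \<in> set xs" "xs ! Suc i \<in> set xs" using i(1) by simp_all
  with assms(2) have "xs ! i < n" "xs ! Suc i < n" by auto
  moreover have "xs ! i \<noteq> xs ! Suc i"
    using assms(1) i(1) by (simp add: nth_eq_iff_index_eq)
  ultimately show "e \<in> all_edges n" unfolding i(2) all_edges_def by blast
qed

lemma edges_off_path_subset_all_edges:
  "u \<in> set xs \<Longrightarrow> set xs \<subseteq> {..<n} \<Longrightarrow> edges_off_path n xs u \<subseteq> all_edges n"
  unfolding edges_off_path_def all_edges_def by fastforce

lemma card_path_edges: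
  assumes "distinct xs"
  shows "card (path_edges xs) = length xs - 1"
proof -
  have "inj_on (\<lambda>i. {xs ! i, xs ! Suc i}) {i. Suc i < length xs}"
    using assms by (auto simp: inj_on_def doubleton_eq_iff nth_eq_iff_index_eq)
  then have "card (path_edges xs) = card {i. Suc i < length xs}"
    unfolding path_edges_def by (rule card_image)
  also have "{i. Suc i < length xs} = {..<length xs - 1}" by auto
  finally show ?thesis by simp
qed

lemma card_edges_off_path:
  assumes "distinct xs" "set xs \<subseteq> {..<n}"
  shows "card (edges_off_path n xs u) = n - length xs"
proof -
  have "inj_on (\<lambda>w. {u, w}) ({..<n} - set xs)"
    by (auto simp: inj_on_def doubleton_eq_iff)
  then have "card (edges_off_path n xs u) = card ({..<n} - set xs)"
    unfolding edges_off_path_def by (rule card_image)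
  also have "\<dots> = n - length xs"
    using assms by (simp add: card_Diff_subset distinct_card)
  finally show ?thesis .
qed

lemma path_edges_Int_edges_off_path:
  "u \<in> set xs \<Longrightarrow> path_edges xs \<inter> edges_off_path n xs u = {}"
  unfolding path_edges_def edges_off_path_def
  by (auto simp: doubleton_eq_iff dest: nth_mem)

lemma edges_off_path_Int:
  "u \<noteq> v \<Longrightarrow> u \<in> set xs \<Longrightarrow> v \<in> set xs \<Longrightarrow> edges_off_path n xs u \<inter> edges_off_path n xs v = {}"
  unfolding edges_off_path_def by (auto simp: doubleton_eq_iff)

lemma card_Int_edges_off_path_le_degree:
  assumes "E \<subseteq> all_edges n"
  shows "card (E \<inter> edges_off_path n xs u) \<le> degree E u"
proof -
  have fin: "finite {w. {w, u} \<in> E}"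
    by (rule finite_subset[of _ "{..<n}"]) (use assms in \<open>auto simp: all_edges_def doubleton_eq_iff\<close>)
  have "E \<inter> edges_off_path n xs u \<subseteq> (\<lambda>w. {u, w}) ` {w. {w, u} \<in> E}"
    unfolding edges_off_path_def by (auto simp: insert_commute)
  then have "card (E \<inter> edges_off_path n xs u) \<le> card ((\<lambda>w. {u, w}) ` {w. {w, u} \<in> E})"
    using fin by (intro card_mono) auto
  also have "\<dots> \<le> degree E u"
    unfolding degree_def by (rule card_image_le[OF fin])
  finally show ?thesis .
qed

definition close_small_pair :: "nat \<Rightarrow> real \<Rightarrow> real \<Rightarrow> nat set set \<Rightarrow> bool" where
  "close_small_pair n T X E \<longleftrightarrow> (\<exists>u v. u < n \<and> v < n \<and> u \<noteq> v \<and>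
     real (degree E u) < T \<and> real (degree E v) < T \<and> dist_at_most E u v X)"

lemma close_small_pair_imp_sparse_ended_path:
  assumes E: "E \<subseteq> all_edges n" and "close_small_pair n T X E"
  obtains l xs where "1 \<le> l" "real l \<le> X" "set xs \<subseteq> {..<n}" "length xs = Suc l"
    "sparse_ended_path n T xs E"
proof -
  obtain u v ws where uv: "u \<noteq> v" "real (degree E u) < T" "real (degree E v) < T"
    and ws: "is_walk E ws" "hd ws = u" "last ws = v" "real (length ws - 1) \<le> X"
    using assms(2) unfolding close_small_pair_def dist_at_most_def by blast
  obtain ys where ys: "is_walk E ys" "distinct ys" "hd ys = u" "last ys = v" "length ys \<le> length ws"
    using is_walk_imp_distinct_walk[OF ws(1)] ws(2,3) by metis
  have "ys \<noteq> []" using ys(1) unfolding is_walk_def by simp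
  then have long: "2 \<le> length ys"
    using ys(3,4) uv(1) by (cases ys rule: remdups_adj.cases) auto
  have "real (length ys - 1) \<le> X"
    using ws(4) ys(5) by (meson diff_le_mono of_nat_le_iff order_trans)
  moreover have "path_edges ys \<subseteq> E"
    using ys(1) unfolding is_walk_def path_edges_def by auto
  moreover have "real (card (E \<inter> edges_off_path n ys w)) < T" if "w = u \<or> w = v" for w
    using card_Int_edges_off_path_le_degree[OF E, of ys w] uv that
    by (meson le_less_trans of_nat_le_iff)
  ultimately show ?thesis
    using that[of "length ys - 1" ys] long ys(2-4) is_walk_set_subset[OF ys(1) E long]
    unfolding sparse_ended_path_def by auto
qed

lemma gnp_prob_sparse_ended_path_le:
  fixes p c t :: real
  assumes p: "0 \<le> p" "p \<le> 1" and c: "0 < c" "c \<le> 1"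
    and xs: "set xs \<subseteq> {..<n}" "length xs = Suc l" "1 \<le> l"
  shows "gnp_prob n p (sparse_ended_path n t xs)
    \<le> c powr (-2 * t) * (p ^ l * (c * p + 1 - p) ^ (2 * (n - Suc l)))"
proof (cases "distinct xs")
  case False
  then have "gnp_prob n p (sparse_ended_path n t xs) = 0"
    unfolding gnp_prob_def sparse_ended_path_def by simp
  moreover have "0 \<le> c * p + 1 - p" using p c mult_nonneg_nonneg[of c p] by linarith
  ultimately show ?thesis using p by simp
next
  case True
  let ?u = "hd xs" and ?v = "last xs" and ?B = "\<lambda>w. edges_off_path n xs w"
  have ends: "?u \<in> set xs" "?v \<in> set xs" using xs(2) by (auto intro: hd_in_set last_in_set)
  have "xs \<noteq> []" using xs(2) by auto
  then have "?u = xs ! 0" "?v = xs ! l" using xs(2) by (simp_all add: hd_conv_nth last_conv_nth)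
  then have "?u \<noteq> ?v" using True xs(2,3) by (simp add: nth_eq_iff_index_eq)
  then have disj: "?B ?u \<inter> ?B ?v = {}" by (rule edges_off_path_Int[OF _ ends])
  have "gnp_prob n p (sparse_ended_path n t xs)
      \<le> c powr (- (2 * t)) * (p ^ card (path_edges xs) * (c * p + 1 - p) ^ card (?B ?u \<union> ?B ?v))"
  proof (rule gnp_prob_le_exponential_moment[OF _ _ _ p c])
    show "path_edges xs \<subseteq> all_edges n" by (rule path_edges_subset_all_edges[OF True xs(1)])
    show "?B ?u \<union> ?B ?v \<subseteq> all_edges n"
      using edges_off_path_subset_all_edges[OF _ xs(1)] ends by blast
    show "path_edges xs \<inter> (?B ?u \<union> ?B ?v) = {}"
      using path_edges_Int_edges_off_path ends by blast
    fix E assume "E \<subseteq> all_edges n" "sparse_ended_path n t xs E"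
    moreover have "card (E \<inter> (?B ?u \<union> ?B ?v)) = card (E \<inter> ?B ?u) + card (E \<inter> ?B ?v)"
      using disj finite_subset[OF \<open>E \<subseteq> all_edges n\<close> finite_all_edges]
      by (subst Int_Un_distrib) (rule card_Un_disjoint; auto)
    ultimately show "path_edges xs \<subseteq> E \<and> real (card (E \<inter> (?B ?u \<union> ?B ?v))) < 2 * t"
      unfolding sparse_ended_path_def by simp
  qed
  also have "card (path_edges xs) = l" using card_path_edges[OF True] xs(2) by simp
  also have "card (?B ?u \<union> ?B ?v) = 2 * (n - Suc l)"
    using card_edges_off_path[OF True xs(1)] xs(2) disj
    by (subst card_Un_disjoint) (auto simp: edges_off_path_def)
  finally show ?thesis by simp
qed

lemma finite_nat_le_real: "finite {l::nat. real l \<le> X}"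
  by (rule finite_subset[of _ "{..nat \<lceil>X\<rceil>}"]) (auto simp: le_nat_iff le_ceiling_iff)

lemma gnp_prob_close_small_pair_le:
  fixes p c T X :: real
  assumes p: "0 \<le> p" "p \<le> 1" and c: "0 < c" "c \<le> 1"
  shows "gnp_prob n p (close_small_pair n T X)
    \<le> (\<Sum>l | 1 \<le> l \<and> real l \<le> X. real n ^ Suc l * (c powr (-2 * T) * (p ^ l * (c * p + 1 - p) ^ (2 * (n - Suc l)))))"
proof -
  let ?L = "{l::nat. 1 \<le> l \<and> real l \<le> X}"
  let ?paths = "\<lambda>l. {xs. set xs \<subseteq> {..<n} \<and> length xs = Suc l}"
  have fin_L: "finite ?L" by (rule finite_subset[OF _ finite_nat_le_real]) auto
  have fin_paths: "finite (?paths l)" for l by (rule finite_lists_length_eq) simp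
  have "gnp_prob n p (close_small_pair n T X)
      \<le> (\<Sum>i\<in>Sigma ?L ?paths. gnp_prob n p (sparse_ended_path n T (snd i)))"
  proof (rule gnp_prob_union_bound[OF p])
    show "finite (Sigma ?L ?paths)" using fin_L fin_paths by simp
    fix E assume "E \<subseteq> all_edges n" "close_small_pair n T X E"
    then show "\<exists>i\<in>Sigma ?L ?paths. sparse_ended_path n T (snd i) E"
      by (rule close_small_pair_imp_sparse_ended_path) auto
  qed
  also have "\<dots> = (\<Sum>l\<in>?L. \<Sum>xs\<in>?paths l. gnp_prob n p (sparse_ended_path n T xs))"
    by (subst sum.Sigma[OF fin_L]) (use fin_paths in \<open>auto simp: split_beta\<close>)
  also have "\<dots> \<le> (\<Sum>l\<in>?L. real (card (?paths l)) * (c powr (-2 * T) * (p ^ l * (c * p + 1 - p) ^ (2 * (n - Suc l)))))"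
    by (intro sum_mono sum_bounded_above) (use p c gnp_prob_sparse_ended_path_le in auto)
  also have "\<dots> = (\<Sum>l\<in>?L. real n ^ Suc l * (c powr (-2 * T) * (p ^ l * (c * p + 1 - p) ^ (2 * (n - Suc l)))))"
    by (simp add: card_lists_length_eq)
  finally show ?thesis .
qed

lemma close_small_pair_sum_le:
  fixes p c T X :: real
  assumes p: "0 \<le> p" "p \<le> 1" and c: "0 < c" "c \<le> 1"
    and "1 \<le> real n * p" "0 \<le> X" "X + 1 \<le> real n"
  shows "(\<Sum>l | 1 \<le> l \<and> real l \<le> X. real n ^ Suc l * (c powr (-2 * T) * (p ^ l * (c * p + 1 - p) ^ (2 * (n - Suc l)))))
    \<le> X * (real n * (real n * p) powr X * c powr (-2 * T) * exp (- 2 * (1 - c) * p * (real n - X - 1)))"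
proof -
  let ?L = "{l::nat. 1 \<le> l \<and> real l \<le> X}"
  let ?bound = "real n * (real n * p) powr X * c powr (-2 * T) * exp (- 2 * (1 - c) * p * (real n - X - 1))"
  have term_le: "real n ^ Suc l * (c powr (-2 * T) * (p ^ l * (c * p + 1 - p) ^ (2 * (n - Suc l)))) \<le> ?bound"
    if l: "l \<in> ?L" for l
  proof -
    have "real n ^ Suc l * p ^ l = real n * (real n * p) powr real l"
      using assms(5) by (simp add: powr_realpow power_mult_distrib)
    also have "\<dots> \<le> real n * (real n * p) powr X"
      using assms(5) l by (intro mult_left_mono powr_mono) auto
    finally have walks: "real n ^ Suc l * p ^ l \<le> real n * (real n * p) powr X" .
    have "0 \<le> c * p + 1 - p" using p c mult_nonneg_nonneg[of c p] by linarith
    then have "(c * p + 1 - p) ^ (2 * (n - Suc l)) \<le> exp (- (1 - c) * p) ^ (2 * (n - Suc l))"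
      using exp_ge_add_one_self[of "- (1 - c) * p"] by (intro power_mono) (auto simp: algebra_simps)
    also have "\<dots> = exp (- (1 - c) * p * real (2 * (n - Suc l)))"
      by (simp add: exp_of_nat_mult[symmetric] mult.commute)
    also have "\<dots> \<le> exp (- 2 * (1 - c) * p * (real n - X - 1))"
    proof -
      have "2 * (real n - X - 1) \<le> real (2 * (n - Suc l))"
        using l assms(7) by (simp add: of_nat_diff)
      moreover have "- (1 - c) * p \<le> 0" using p c by (simp add: mult_nonpos_nonneg)
      ultimately have "- (1 - c) * p * real (2 * (n - Suc l)) \<le> - (1 - c) * p * (2 * (real n - X - 1))"
        by (rule mult_left_mono_neg)
      then show ?thesis by (simp add: algebra_simps)
    qed
    finally have off_path: "(c * p + 1 - p) ^ (2 * (n - Suc l)) \<le> exp (- 2 * (1 - c) * p * (real n - X - 1))" .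
    have "real n ^ Suc l * p ^ l * (c * p + 1 - p) ^ (2 * (n - Suc l))
        \<le> real n * (real n * p) powr X * exp (- 2 * (1 - c) * p * (real n - X - 1))"
      by (rule mult_mono[OF walks off_path]) auto
    then have "c powr (-2 * T) * (real n ^ Suc l * p ^ l * (c * p + 1 - p) ^ (2 * (n - Suc l)))
        \<le> c powr (-2 * T) * (real n * (real n * p) powr X * exp (- 2 * (1 - c) * p * (real n - X - 1)))"
      by (rule mult_left_mono) simp
    then show ?thesis by (simp only: ac_simps)
  qed
  have "real (card ?L) \<le> X"
  proof -
    have "?L \<subseteq> {1..nat \<lfloor>X\<rfloor>}" by (auto simp: le_nat_iff le_floor_iff)
    then have "card ?L \<le> nat \<lfloor>X\<rfloor>" by (metis card_atLeastAtMost card_mono diff_Suc_1 finite_atLeastAtMost)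
    then show ?thesis using assms(6) by linarith
  qed
  moreover have "0 \<le> ?bound" by simp
  ultimately show ?thesis
    using sum_bounded_above[of ?L _ ?bound, OF term_le] by (meson mult_right_mono order_trans)
qed

lemma gnp_prob_close_small_pair_le_exp:
  fixes n :: nat and p X :: real
  defines "L \<equiv> ln (real n)"
  assumes L: "1 \<le> L" "0 < ln L" and p: "L \<le> real n * p" "real n * p \<le> 2 * L" "p \<le> 1"
    and X: "X = 3/4 * (L / ln L)" "X + 1 \<le> real n"
  shows "gnp_prob n p (close_small_pair n (L / 100) X)
    \<le> X * real n * exp (X + 3/4 * L + 12/100 * L - 63/32 * (L / real n) * (real n - X - 1))"
proof -
  have n: "0 < real n" using L(1) p(1) by (cases "n = 0") auto
  have "0 \<le> real n * p" using L(1) p(1) by linarith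
  then have "0 \<le> p" using n by (simp add: zero_le_mult_iff)
  have "0 \<le> X" using X(1) L by simp
  have walks: "(real n * p) powr X \<le> exp (X + 3/4 * L)"
  proof -
    have "(real n * p) powr X \<le> (2 * L) powr X"
      using L(1) p(1,2) \<open>0 \<le> X\<close> by (intro powr_mono2) auto
    also have "\<dots> = exp (X * ln 2 + X * ln L)"
      using L(1) by (simp add: powr_def ln_mult distrib_left)
    also have "X * ln 2 \<le> X" using \<open>0 \<le> X\<close> ln_2_less_1 by (simp add: mult_left_le)
    also have "X * ln L = 3/4 * L" using X(1) L(2) by simp
    finally show ?thesis by simp
  qed
  have ends: "(1/64::real) powr (-2 * (L / 100)) \<le> exp (12/100 * L)"
  proof -
    have "ln (64::real) = 6 * ln 2" using ln_realpow[of 2 6] by simp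
    then have "ln (64::real) \<le> 6" using ln_2_less_1 by simp
    then show ?thesis using L(1) by (simp add: powr_def ln_div)
  qed
  have off_path: "exp (- 2 * (1 - 1/64) * p * (real n - X - 1)) \<le> exp (- 63/32 * (L / real n) * (real n - X - 1))"
  proof -
    have "L / real n \<le> p" using p(1) n by (simp add: divide_le_eq mult.commute)
    then have "63/32 * (L / real n) * (real n - X - 1) \<le> 63/32 * p * (real n - X - 1)"
      using X(2) by (intro mult_right_mono) auto
    then show ?thesis by simp
  qed
  have "gnp_prob n p (close_small_pair n (L / 100) X)
      \<le> X * (real n * (real n * p) powr X * (1/64) powr (-2 * (L / 100)) * exp (- 2 * (1 - 1/64) * p * (real n - X - 1)))"
    using gnp_prob_close_small_pair_le[of p "1/64" n "L / 100" X]
      close_small_pair_sum_le[of p "1/64" n X "L / 100"] \<open>0 \<le> p\<close> p L(1) X(2) \<open>0 \<le> X\<close>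
    by simp
  also have "\<dots> \<le> X * (real n * exp (X + 3/4 * L) * exp (12/100 * L) * exp (- 63/32 * (L / real n) * (real n - X - 1)))"
    using walks ends off_path \<open>0 \<le> X\<close> n by (intro mult_left_mono mult_mono) auto
  also have "\<dots> = X * real n * exp (X + 3/4 * L + 12/100 * L - 63/32 * (L / real n) * (real n - X - 1))"
    by (simp add: mult.assoc flip: exp_add)
  finally show ?thesis .
qed

theorem lemma4:
  fixes k :: nat and p D :: "nat \<Rightarrow> real"
  assumes "k \<ge> 1"
  defines "p \<equiv> (\<lambda>n. (ln (real n) + (real k + 1) * ln (ln (real n)) - ln (ln (ln (real n)))) / real n)"
    and "D \<equiv> (\<lambda>n. ln (real n) / ln (ln (real n)))"
  shows "(\<lambda>n. gnp_prob n (p n)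
            (\<lambda>E. \<not> (\<exists>u v. u < n \<and> v < n \<and> u \<noteq> v \<and>
                   real (degree E u) < ln (real n) / 100 \<and>
                   real (degree E v) < ln (real n) / 100 \<and>
                   dist_at_most E u v (3 / 4 * D n))))
         \<longlonglongrightarrow> 1"
proof -
  define bad where "bad n = gnp_prob n (p n) (close_small_pair n (ln (real n) / 100) (3/4 * D n))" for n
  define bound where "bound n = 3/4 * D n * real n * exp (3/4 * D n + 3/4 * ln (real n) + 12/100 * ln (real n)
    - 63/32 * (ln (real n) / real n) * (real n - 3/4 * D n - 1))" for n
  have "eventually (\<lambda>n. 1 \<le> ln (real n)) sequentially"
    "eventually (\<lambda>n. 0 < ln (ln (real n))) sequentially"
    "eventually (\<lambda>n. ln (real n) \<le> real n * p n) sequentially"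
    "eventually (\<lambda>n. real n * p n \<le> 2 * ln (real n)) sequentially"
    "eventually (\<lambda>n. 0 \<le> p n) sequentially"
    "eventually (\<lambda>n. p n \<le> 1) sequentially"
    "eventually (\<lambda>n. 3/4 * D n + 1 \<le> real n) sequentially"
    using assms(1) unfolding p_def D_def by real_asymp+
  then have "eventually (\<lambda>n. 0 \<le> bad n \<and> bad n \<le> bound n) sequentially"
  proof eventually_elim
    case (elim n)
    have "0 \<le> bad n" unfolding bad_def by (rule gnp_prob_nonneg) (use elim in auto)
    moreover have "bad n \<le> bound n" unfolding bad_def bound_def D_def
      by (rule gnp_prob_close_small_pair_le_exp) (use elim in \<open>auto simp: D_def\<close>)
    ultimately show ?case ..
  qed
  moreover have "bound \<longlonglongrightarrow> 0" unfolding bound_def D_def by real_asymp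
  ultimately have "bad \<longlonglongrightarrow> 0"
    using tendsto_sandwich[of "\<lambda>_. 0" bad sequentially bound 0]
    by (simp add: eventually_conj_iff)
  then have "(\<lambda>n. 1 - bad n) \<longlonglongrightarrow> 1 - 0" by (intro tendsto_diff tendsto_const)
  then show ?thesis unfolding bad_def close_small_pair_def gnp_prob_Not by simp
qed

end
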